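(* Let $r,c\ge1$, $n=r+c$, $X_1,X_2$ as below, and $1\le K\le 2^{\min(r,c)}$. Let $\varphi$ be uniformly random among permutations of $\{0,1\}^n$ with exactly $K$ $X$-pairs. Any quantum algorithm making $T$ queries to $\varphi$ and $\varphi^{-1}$ that outputs an $X$-pair of $\varphi$ with probability $\epsilon>0$ satisfies $$\epsilon\le\frac{8(T+1)^2K}{2^{\min(r,c)}}.$$
   Context: $X_1\subset\{0,1\}^n$ is the set of strings ending in $0^c$, $X_2\subset\{0,1\}^n$ the set of strings beginning with $0^r$; an $X$-pair of $\varphi$ is $(x,y)\in X_1\times X_2$ with $\varphi(x)=y$. Queries are to the unitaries $O_\varphi:|a\rangle|b\rangle\mapsto|a\rangle|b\oplus\varphi(a)\rangle$ and $O_{\varphi^{-1}}:|a\rangle|b\rangle\mapsto|a\rangle|b\oplus\varphi^{-1}(a)\rangle$; success probability is over $\varphi$ and the algorithm's randomness and measurements. *)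

theory Defs
  imports Complex_Main "HOL-Combinatorics.Permutations"
begin

text \<open>Bit strings of length n are encoded as naturals below 2^n, the first bit being
the most significant one. XOR is bitwise xor on nat.\<close>

definition strings :: "nat \<Rightarrow> nat set" where
  "strings n = {..<2^n}"

text \<open>X1: strings (of length n = r + c) ending in 0^c, i.e. the last c bits vanish.\<close>
definition X1 :: "nat \<Rightarrow> nat \<Rightarrow> nat set" where
  "X1 r c = {x \<in> strings (r + c). 2^c dvd x}"

text \<open>X2: strings beginning with 0^r, i.e. the first r bits vanish.\<close>
definition X2 :: "nat \<Rightarrow> nat \<Rightarrow> nat set" where
  "X2 r c = {y \<in> strings (r + c). y < 2^c}"

definition Xpairs :: "nat \<Rightarrow> nat \<Rightarrow> (nat \<Rightarrow> nat) \<Rightarrow> (nat \<times> nat) set" where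
  "Xpairs r c \<phi> = {(x, y). x \<in> X1 r c \<and> y \<in> X2 r c \<and> \<phi> x = y}"

definition perms_K :: "nat \<Rightarrow> nat \<Rightarrow> nat \<Rightarrow> (nat \<Rightarrow> nat) set" where
  "perms_K r c K = {\<phi>. \<phi> permutes strings (r + c) \<and> card (Xpairs r c \<phi>) = K}"

text \<open>Computational basis of the algorithm's register: (a, b, w) with a the n-bit query
input register, b the n-bit query output register, w the workspace (dimension m).
The parity of w selects whether a query goes to phi (even) or to phi^-1 (odd); this lets
the choice of oracle function be coherent / adaptive.\<close>
type_synonym basis = "nat \<times> nat \<times> nat"
type_synonym state = "basis \<Rightarrow> complex"
type_synonym op = "basis \<Rightarrow> basis \<Rightarrow> complex"

definition basis_set :: "nat \<Rightarrow> nat \<Rightarrow> basis set" where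
  "basis_set n m = strings n \<times> strings n \<times> {..<m}"

definition apply_op :: "basis set \<Rightarrow> op \<Rightarrow> state \<Rightarrow> state" where
  "apply_op S U v = (\<lambda>x. \<Sum>y\<in>S. U x y * v y)"

definition is_unitary :: "basis set \<Rightarrow> op \<Rightarrow> bool" where
  "is_unitary S U \<longleftrightarrow>
     (\<forall>x\<in>S. \<forall>y\<in>S. (\<Sum>z\<in>S. cnj (U z x) * U z y) = (if x = y then 1 else 0))"

text \<open>The query: |a>|b>|w> maps to |a>|b xor phi(a)>|w> (w even) or
|a>|b xor phi^-1(a)>|w> (w odd). As a map on amplitudes (it is an involution on the basis).\<close>
definition query_op :: "nat \<Rightarrow> (nat \<Rightarrow> nat) \<Rightarrow> state \<Rightarrow> state" where
  "query_op n \<phi> v = (\<lambda>(a, b, w).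
      if even w then v (a, xor b (\<phi> a), w)
      else v (a, xor b (inv_into (strings n) \<phi> a), w))"

definition init_state :: state where
  "init_state = (\<lambda>x. if x = (0, 0, 0) then 1 else 0)"

fun run :: "nat \<Rightarrow> nat \<Rightarrow> (nat \<Rightarrow> nat) \<Rightarrow> (nat \<Rightarrow> op) \<Rightarrow> nat \<Rightarrow> state" where
  "run n m \<phi> Us 0 = apply_op (basis_set n m) (Us 0) init_state"
| "run n m \<phi> Us (Suc t) = apply_op (basis_set n m) (Us (Suc t)) (query_op n \<phi> (run n m \<phi> Us t))"

definition success_prob ::
  "nat \<Rightarrow> nat \<Rightarrow> nat \<Rightarrow> (nat \<Rightarrow> op) \<Rightarrow> (basis \<Rightarrow> nat \<times> nat) \<Rightarrow> nat \<Rightarrow> (nat \<Rightarrow> nat) \<Rightarrow> real" where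
  "success_prob r c m Us out T \<phi> =
     (\<Sum>z\<in>basis_set (r + c) m.
        if out z \<in> Xpairs r c \<phi> then (cmod (run (r + c) m \<phi> Us T z))^2 else 0)"

definition avg_success ::
  "nat \<Rightarrow> nat \<Rightarrow> nat \<Rightarrow> nat \<Rightarrow> (nat \<Rightarrow> op) \<Rightarrow> (basis \<Rightarrow> nat \<times> nat) \<Rightarrow> nat \<Rightarrow> real" where
  "avg_success r c K m Us out T =
     (\<Sum>\<phi>\<in>perms_K r c K. success_prob r c m Us out T \<phi>) / real (card (perms_K r c K))"

end

theory Submission
  imports Defs "HOL-Analysis.L2_Norm" "HOL-Analysis.Convex"
begin

text \<open>Every permutation \<open>\<phi>\<close> with \<open>K\<close> X-pairs factors as \<open>\<rho> \<circ> s\<close>, where \<open>\<rho>\<close> has no X-pair and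
  \<open>s\<close> is an involution exchanging \<open>K\<close> points of \<open>X1\<close> with \<open>K\<close> points of the preimage of \<open>X2\<close>
  under \<open>\<rho>\<close>; every \<open>\<phi>\<close> has the same number of such factorisations, so averaging over \<open>\<phi>\<close> is
  averaging over pairs \<open>(\<rho>, s)\<close>. Fix \<open>\<rho>\<close>. The oracles of \<open>\<rho> \<circ> s\<close> and \<open>\<rho>\<close> differ only on
  inputs whose relevant point is moved by \<open>s\<close>, and an outcome of the \<open>\<rho>\<close>-run is an X-pair of
  \<open>\<rho> \<circ> s\<close> only if \<open>s\<close> moves its first component. Conjugating by transpositions shows that a
  given point is moved by at most a fraction \<open>K / 2 ^ min r c\<close> of the involutions. The hybrid
  argument bounds the distance between the final states of the two runs by the sum over the
  queries of twice the norm of the part of the \<open>\<rho>\<close>-state on which the oracles disagree; with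
  Cauchy-Schwarz this bounds the average success probability by
  \<open>(T + 1) (1 + 4 T) K / 2 ^ min r c \<le> 8 (T + 1)\<^sup>2 K / 2 ^ min r c\<close>.\<close>

definition sqnorm_on :: "'a set \<Rightarrow> ('a \<Rightarrow> complex) \<Rightarrow> real" where
  "sqnorm_on E v = (\<Sum>z\<in>E. (cmod (v z))\<^sup>2)"

definition norm_on :: "'a set \<Rightarrow> ('a \<Rightarrow> complex) \<Rightarrow> real" where
  "norm_on E v = sqrt (sqnorm_on E v)"

lemma norm_on_eq_L2_set: "norm_on E v = L2_set (\<lambda>z. cmod (v z)) E"
  by (simp add: norm_on_def sqnorm_on_def L2_set_def)

lemma norm_on_nonneg: "0 \<le> norm_on E v"
  by (simp add: norm_on_eq_L2_set)

lemma norm_on_square: "(norm_on E v)\<^sup>2 = sqnorm_on E v"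
  by (simp add: norm_on_def sqnorm_on_def sum_nonneg)

lemma norm_on_add_le: "norm_on E (\<lambda>z. v z + w z) \<le> norm_on E v + norm_on E w"
proof -
  have "norm_on E (\<lambda>z. v z + w z) \<le> L2_set (\<lambda>z. cmod (v z) + cmod (w z)) E"
    unfolding norm_on_eq_L2_set by (rule L2_set_mono) (auto intro: norm_triangle_ineq)
  also have "\<dots> \<le> norm_on E v + norm_on E w"
    unfolding norm_on_eq_L2_set by (rule L2_set_triangle_ineq)
  finally show ?thesis .
qed

lemma norm_on_diff_le: "norm_on E (\<lambda>z. v z - w z) \<le> norm_on E v + norm_on E w"
  using norm_on_add_le[of E v "\<lambda>z. - w z"] by (simp add: norm_on_def sqnorm_on_def)

lemma sqnorm_on_mono: "A \<subseteq> B \<Longrightarrow> finite B \<Longrightarrow> sqnorm_on A v \<le> sqnorm_on B v"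
  unfolding sqnorm_on_def by (rule sum_mono2) auto

lemma norm_on_mono: "A \<subseteq> B \<Longrightarrow> finite B \<Longrightarrow> norm_on A v \<le> norm_on B v"
  unfolding norm_on_def by (intro real_sqrt_le_mono sqnorm_on_mono)

lemma norm_on_vanishing_outside:
  assumes "D \<subseteq> B" "finite B" "\<And>z. z \<in> B - D \<Longrightarrow> v z = 0"
  shows "norm_on B v = norm_on D v"
  unfolding norm_on_def sqnorm_on_def using assms by (subst sum.mono_neutral_right) auto

lemma sqnorm_on_comp_bij: "bij_betw h E E \<Longrightarrow> sqnorm_on E (v \<circ> h) = sqnorm_on E v"
  unfolding sqnorm_on_def comp_def by (rule sum.reindex_bij_betw)

lemma norm_on_comp_bij: "bij_betw h E E \<Longrightarrow> norm_on E (v \<circ> h) = norm_on E v"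
  by (simp add: norm_on_def sqnorm_on_comp_bij)

lemma sum_sqnorm_on_filter_le:
  assumes "finite B" "finite W" "sqnorm_on B v = 1"
    and "\<And>z. z \<in> B \<Longrightarrow> real (card {s\<in>W. P s z}) \<le> \<delta>"
  shows "(\<Sum>s\<in>W. sqnorm_on {z\<in>B. P s z} v) \<le> \<delta>"
proof -
  have "(\<Sum>s\<in>W. sqnorm_on {z\<in>B. P s z} v) = (\<Sum>s\<in>W. \<Sum>z\<in>B. if P s z then (cmod (v z))\<^sup>2 else 0)"
    unfolding sqnorm_on_def using assms(1) by (simp add: sum.inter_filter)
  also have "\<dots> = (\<Sum>z\<in>B. (cmod (v z))\<^sup>2 * real (card {s\<in>W. P s z}))"
    using assms(2) by (subst sum.swap) (simp add: sum.inter_filter[symmetric] mult.commute)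
  also have "\<dots> \<le> (\<Sum>z\<in>B. (cmod (v z))\<^sup>2 * \<delta>)"
    using assms(4) by (intro sum_mono mult_left_mono) auto
  also have "\<dots> = \<delta>"
    using assms(3) by (simp add: sqnorm_on_def sum_distrib_right[symmetric])
  finally show ?thesis .
qed

lemma power2_add_sum_le: "(a + (\<Sum>i<T. b i))\<^sup>2 \<le> (real T + 1) * (a\<^sup>2 + (\<Sum>i<T. (b i)\<^sup>2))"
  for a :: real
proof -
  define f where "f i = (if i = T then a else b i)" for i
  have "(\<Sum>i<Suc T. f i)\<^sup>2 \<le> (\<Sum>i<Suc T. (f i)\<^sup>2) * real (card {..<Suc T})"
    by (rule sum_squared_le_sum_of_squares)
  then show ?thesis
    by (simp add: f_def algebra_simps)
qed

lemma finite_basis_set [simp]: "finite (basis_set n m)"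
  by (simp add: basis_set_def strings_def)

lemma xor_in_strings: "b \<in> strings n \<Longrightarrow> k \<in> strings n \<Longrightarrow> xor b k \<in> strings n"
  by (simp add: strings_def) (metis take_bit_nat_eq_self_iff take_bit_xor)

lemma sqnorm_on_apply_op_unitary:
  assumes U: "is_unitary S U" and fin: "finite S"
  shows "sqnorm_on S (apply_op S U v) = sqnorm_on S v"
proof -
  have cmod_sq: "complex_of_real ((cmod x)\<^sup>2) = x * cnj x" for x
    by (simp add: complex_mult_cnj cmod_def power2_eq_square)
  have "complex_of_real (sqnorm_on S (apply_op S U v)) =
     (\<Sum>z\<in>S. (\<Sum>y\<in>S. U z y * v y) * cnj (\<Sum>y\<in>S. U z y * v y))"
    by (simp only: sqnorm_on_def apply_op_def of_real_sum cmod_sq)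
  also have "\<dots> = (\<Sum>z\<in>S. \<Sum>y\<in>S. \<Sum>y'\<in>S. v y * cnj (v y') * (cnj (U z y') * U z y))"
    unfolding cnj_sum sum_product by (intro sum.cong refl) (simp add: mult_ac)
  also have "\<dots> = (\<Sum>y\<in>S. \<Sum>z\<in>S. \<Sum>y'\<in>S. v y * cnj (v y') * (cnj (U z y') * U z y))"
    by (rule sum.swap)
  also have "\<dots> = (\<Sum>y\<in>S. \<Sum>y'\<in>S. v y * cnj (v y') * (\<Sum>z\<in>S. cnj (U z y') * U z y))"
    by (intro sum.cong refl trans[OF sum.swap]) (simp add: sum_distrib_left)
  also have "\<dots> = (\<Sum>y\<in>S. \<Sum>y'\<in>S. if y' = y then v y * cnj (v y') else 0)"
    using U unfolding is_unitary_def by (intro sum.cong refl) auto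
  also have "\<dots> = (\<Sum>y\<in>S. v y * cnj (v y))"
    using fin by simp
  also have "\<dots> = complex_of_real (sqnorm_on S v)"
    by (simp only: sqnorm_on_def of_real_sum cmod_sq)
  finally show ?thesis by (simp only: of_real_eq_iff)
qed

lemma apply_op_diff:
  "apply_op B U v z - apply_op B U w z = apply_op B U (\<lambda>z. v z - w z) z"
  by (simp add: apply_op_def sum_subtractf[symmetric] right_diff_distrib)

definition query_shift :: "(nat \<Rightarrow> nat \<Rightarrow> nat) \<Rightarrow> basis \<Rightarrow> basis" where
  "query_shift g = (\<lambda>(a, b, w). (a, xor b (g a w), w))"

definition oracle_fun :: "nat \<Rightarrow> (nat \<Rightarrow> nat) \<Rightarrow> nat \<Rightarrow> nat \<Rightarrow> nat" where
  "oracle_fun n \<phi> a w = (if even w then \<phi> a else inv_into (strings n) \<phi> a)"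

definition disagreement :: "nat \<Rightarrow> nat \<Rightarrow> (nat \<Rightarrow> nat \<Rightarrow> nat) \<Rightarrow> (nat \<Rightarrow> nat \<Rightarrow> nat) \<Rightarrow> basis set" where
  "disagreement n m g h = {z \<in> basis_set n m. g (fst z) (snd (snd z)) \<noteq> h (fst z) (snd (snd z))}"

lemma query_op_eq_comp: "query_op n \<phi> v = v \<circ> query_shift (oracle_fun n \<phi>)"
  by (auto simp: query_op_def query_shift_def oracle_fun_def fun_eq_iff)

lemma oracle_fun_in_strings:
  assumes "\<phi> permutes strings n" "a \<in> strings n"
  shows "oracle_fun n \<phi> a w \<in> strings n"
  using assms by (auto simp: oracle_fun_def permutes_in_image permutes_image intro: inv_into_into)

lemma bij_betw_query_shift:
  assumes "\<And>a w. a \<in> strings n \<Longrightarrow> g a w \<in> strings n"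
  shows "bij_betw (query_shift g) {z \<in> basis_set n m. Q (fst z) (snd (snd z))}
                                  {z \<in> basis_set n m. Q (fst z) (snd (snd z))}"
  by (rule bij_betw_byWitness[where f' = "query_shift g"])
    (auto simp: query_shift_def basis_set_def xor.assoc xor_in_strings assms)

lemma norm_on_query_shift_diff_le:
  assumes g: "\<And>a w. a \<in> strings n \<Longrightarrow> g a w \<in> strings n"
    and h: "\<And>a w. a \<in> strings n \<Longrightarrow> h a w \<in> strings n"
  shows "norm_on (basis_set n m) (\<lambda>z. v (query_shift g z) - v (query_shift h z))
     \<le> 2 * norm_on (disagreement n m g h) v"
proof -
  let ?D = "disagreement n m g h"
  have "norm_on (basis_set n m) (\<lambda>z. v (query_shift g z) - v (query_shift h z))
      = norm_on ?D (\<lambda>z. v (query_shift g z) - v (query_shift h z))"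
    by (rule norm_on_vanishing_outside) (auto simp: disagreement_def query_shift_def)
  also have "\<dots> \<le> norm_on ?D (v \<circ> query_shift g) + norm_on ?D (v \<circ> query_shift h)"
    using norm_on_diff_le by (simp add: comp_def)
  also have "\<dots> = 2 * norm_on ?D v"
    unfolding disagreement_def
    using norm_on_comp_bij[OF bij_betw_query_shift[OF g, where m = m and Q = "\<lambda>a w. g a w \<noteq> h a w"]]
      norm_on_comp_bij[OF bij_betw_query_shift[OF h, where m = m and Q = "\<lambda>a w. g a w \<noteq> h a w"]]
    by simp
  finally show ?thesis .
qed

lemma sqnorm_on_run:
  assumes U: "\<And>i. i \<le> t \<Longrightarrow> is_unitary (basis_set n m) (Us i)"
    and "m \<ge> 1" and \<phi>: "\<phi> permutes strings n"
  shows "sqnorm_on (basis_set n m) (run n m \<phi> Us t) = 1"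
  using U
proof (induction t)
  case 0
  have "sqnorm_on (basis_set n m) init_state = (\<Sum>z\<in>basis_set n m. if z = (0, 0, 0) then 1 else 0)"
    unfolding sqnorm_on_def init_state_def by (intro sum.cong) auto
  also have "\<dots> = 1"
    using \<open>m \<ge> 1\<close> by (simp add: basis_set_def strings_def)
  finally have "sqnorm_on (basis_set n m) init_state = 1" .
  with 0 show ?case by (simp add: sqnorm_on_apply_op_unitary)
next
  case (Suc t)
  have "bij_betw (query_shift (oracle_fun n \<phi>)) (basis_set n m) (basis_set n m)"
    using bij_betw_query_shift[of n "oracle_fun n \<phi>" m "\<lambda>_ _. True"]
    by (simp add: oracle_fun_in_strings \<phi>)
  with Suc show ?case
    by (simp add: sqnorm_on_apply_op_unitary query_op_eq_comp sqnorm_on_comp_bij)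
qed

section \<open>The hybrid argument\<close>

text \<open>Replacing the oracle for \<open>\<rho>\<close> by the one for \<open>\<psi>\<close> in query \<open>i\<close> moves the state by at
  most twice the norm of its part on which the two oracles disagree.\<close>

lemma norm_on_run_diff_le:
  assumes U: "\<And>i. i \<le> t \<Longrightarrow> is_unitary (basis_set n m) (Us i)"
    and \<psi>: "\<psi> permutes strings n" and \<rho>: "\<rho> permutes strings n"
  shows "norm_on (basis_set n m) (\<lambda>z. run n m \<psi> Us t z - run n m \<rho> Us t z)
     \<le> (\<Sum>i<t. 2 * norm_on (disagreement n m (oracle_fun n \<psi>) (oracle_fun n \<rho>)) (run n m \<rho> Us i))"
  using U
proof (induction t)
  case 0
  show ?case by (simp add: norm_on_def sqnorm_on_def)
next
  case (Suc t)
  let ?B = "basis_set n m" and ?D = "disagreement n m (oracle_fun n \<psi>) (oracle_fun n \<rho>)"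
  let ?x = "run n m \<psi> Us t" and ?y = "run n m \<rho> Us t"
  let ?g = "query_shift (oracle_fun n \<psi>)" and ?h = "query_shift (oracle_fun n \<rho>)"
  have shift_bij: "bij_betw ?g ?B ?B"
    using bij_betw_query_shift[of n "oracle_fun n \<psi>" m "\<lambda>_ _. True"]
    by (simp add: oracle_fun_in_strings \<psi>)
  have "norm_on ?B (\<lambda>z. run n m \<psi> Us (Suc t) z - run n m \<rho> Us (Suc t) z)
      = norm_on ?B (\<lambda>z. (?x (?g z) - ?y (?g z)) + (?y (?g z) - ?y (?h z)))"
    using Suc.prems
    by (simp add: apply_op_diff norm_on_def sqnorm_on_apply_op_unitary query_op_eq_comp)
  also have "\<dots> \<le> norm_on ?B ((\<lambda>z. ?x z - ?y z) \<circ> ?g) + norm_on ?B (\<lambda>z. ?y (?g z) - ?y (?h z))"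
    unfolding comp_def by (rule norm_on_add_le)
  also have "\<dots> \<le> norm_on ?B (\<lambda>z. ?x z - ?y z) + 2 * norm_on ?D ?y"
    using norm_on_query_shift_diff_le[where g = "oracle_fun n \<psi>" and h = "oracle_fun n \<rho>"
        and v = ?y and m = m]
    by (simp add: norm_on_comp_bij[OF shift_bij] oracle_fun_in_strings \<psi> \<rho>)
  also have "\<dots> \<le> (\<Sum>i<Suc t. 2 * norm_on ?D (run n m \<rho> Us i))"
    using Suc by simp
  finally show ?case .
qed

text \<open>Squaring the hybrid bound with Cauchy-Schwarz over the \<open>T + 1\<close> summands.\<close>

lemma sqnorm_on_run_le:
  assumes U: "\<And>i. i \<le> T \<Longrightarrow> is_unitary (basis_set n m) (Us i)"
    and \<psi>: "\<psi> permutes strings n" and \<rho>: "\<rho> permutes strings n"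
    and M: "M \<subseteq> basis_set n m"
  shows "sqnorm_on M (run n m \<psi> Us T) \<le> (real T + 1) * (sqnorm_on M (run n m \<rho> Us T)
       + 4 * (\<Sum>i<T. sqnorm_on (disagreement n m (oracle_fun n \<psi>) (oracle_fun n \<rho>))
                              (run n m \<rho> Us i)))"
proof -
  let ?D = "disagreement n m (oracle_fun n \<psi>) (oracle_fun n \<rho>)"
  let ?x = "run n m \<psi> Us T" and ?y = "run n m \<rho> Us T"
  have "norm_on M ?x \<le> norm_on M ?y + norm_on M (\<lambda>z. ?x z - ?y z)"
    using norm_on_add_le[of M ?y "\<lambda>z. ?x z - ?y z"] by simp
  also have "\<dots> \<le> norm_on M ?y + norm_on (basis_set n m) (\<lambda>z. ?x z - ?y z)"
    using M by (simp add: norm_on_mono)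
  also have "\<dots> \<le> norm_on M ?y + (\<Sum>i<T. 2 * norm_on ?D (run n m \<rho> Us i))"
    using norm_on_run_diff_le[OF U \<psi> \<rho>] by simp
  finally have "(norm_on M ?x)\<^sup>2 \<le> (norm_on M ?y + (\<Sum>i<T. 2 * norm_on ?D (run n m \<rho> Us i)))\<^sup>2"
    by (simp add: norm_on_nonneg power_mono)
  also have "\<dots> \<le> (real T + 1) * ((norm_on M ?y)\<^sup>2 + (\<Sum>i<T. (2 * norm_on ?D (run n m \<rho> Us i))\<^sup>2))"
    by (rule power2_add_sum_le)
  finally show ?thesis
    by (simp add: norm_on_square power_mult_distrib sum_distrib_left)
qed

section \<open>Involutions exchanging points of two sets\<close>

lemma sum_card_filter_swap:
  assumes "finite A" "finite B"
  shows "(\<Sum>a\<in>A. card {b\<in>B. P a b}) = (\<Sum>b\<in>B. card {a\<in>A. P a b})"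
proof -
  have card_filter: "card {x\<in>X. Q x} = (\<Sum>x\<in>X. if Q x then 1 else 0)" if "finite X" for X Q
    using that by (simp flip: sum.inter_filter)
  show ?thesis
    using assms by (simp add: card_filter) (rule sum.swap)
qed

text \<open>If \<open>W\<close> is closed under conjugation by transpositions of \<open>D\<close>, all points of \<open>D\<close> are
  moved by equally many members of \<open>W\<close>; double counting pins this number down.\<close>

lemma card_moving_mult:
  fixes W :: "('a \<Rightarrow> 'a) set"
  assumes "finite W" "finite D"
    and conj: "\<And>s a b. s \<in> W \<Longrightarrow> a \<in> D \<Longrightarrow> b \<in> D \<Longrightarrow>
      Transposition.transpose a b \<circ> s \<circ> Transposition.transpose a b \<in> W"
    and moved: "\<And>s. s \<in> W \<Longrightarrow> card {x\<in>D. s x \<noteq> x} = K"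
    and x: "x \<in> D"
  shows "card {s\<in>W. s x \<noteq> x} * card D = K * card W"
proof -
  have same: "card {s\<in>W. s y \<noteq> y} = card {s\<in>W. s x \<noteq> x}" if y: "y \<in> D" for y
  proof -
    let ?t = "Transposition.transpose x y"
    have "bij_betw (\<lambda>s. ?t \<circ> s \<circ> ?t) {s\<in>W. s x \<noteq> x} {s\<in>W. s y \<noteq> y}"
      by (rule bij_betw_byWitness[where f' = "\<lambda>s. ?t \<circ> s \<circ> ?t"])
        (auto simp: fun_eq_iff x y conj transpose_eq_iff)
    then show ?thesis by (simp add: bij_betw_same_card)
  qed
  have "card D * card {s\<in>W. s x \<noteq> x} = (\<Sum>y\<in>D. card {s\<in>W. s y \<noteq> y})"
    using same by simp
  also have "\<dots> = (\<Sum>s\<in>W. card {y\<in>D. s y \<noteq> y})"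
    by (rule sum_card_filter_swap) (use assms in auto)
  also have "\<dots> = K * card W"
    using moved by simp
  finally show ?thesis by (simp add: mult.commute)
qed

definition swaps :: "'a set \<Rightarrow> 'a set \<Rightarrow> nat \<Rightarrow> ('a \<Rightarrow> 'a) set" where
  "swaps A B K = {s. (\<forall>x. s (s x) = x) \<and> (\<forall>x. x \<notin> A \<union> B \<longrightarrow> s x = x)
     \<and> (\<forall>x\<in>A. s x \<noteq> x \<longrightarrow> s x \<in> B) \<and> (\<forall>y\<in>B. s y \<noteq> y \<longrightarrow> s y \<in> A)
     \<and> card {x\<in>A. s x \<noteq> x} = K}"

lemma swaps_involution: "s \<in> swaps A B K \<Longrightarrow> s (s x) = x"
  by (simp add: swaps_def)

lemma swaps_fixes: "s \<in> swaps A B K \<Longrightarrow> x \<notin> A \<union> B \<Longrightarrow> s x = x"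
  by (simp add: swaps_def)

lemma card_swaps_moved: "s \<in> swaps A B K \<Longrightarrow> card {x\<in>A. s x \<noteq> x} = K"
  by (simp add: swaps_def)

lemma swaps_moves_into:
  "s \<in> swaps A B K \<Longrightarrow> x \<in> A \<Longrightarrow> s x \<noteq> x \<Longrightarrow> s x \<in> B"
  "s \<in> swaps A B K \<Longrightarrow> y \<in> B \<Longrightarrow> s y \<noteq> y \<Longrightarrow> s y \<in> A"
  by (simp_all add: swaps_def)

lemma swaps_commute: "swaps A B K = swaps B A K"
proof -
  have card_eq: "card {x\<in>A. s x \<noteq> x} = card {y\<in>B. s y \<noteq> y}"
    if inv: "\<And>x. s (s x) = x" and AB: "\<forall>x\<in>A. s x \<noteq> x \<longrightarrow> s x \<in> B"
      and BA: "\<forall>y\<in>B. s y \<noteq> y \<longrightarrow> s y \<in> A" for s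
  proof -
    have "bij_betw s {x\<in>A. s x \<noteq> x} {y\<in>B. s y \<noteq> y}"
      by (rule bij_betw_byWitness[where f' = s]) (use AB BA in \<open>auto simp: inv\<close>)
    then show ?thesis by (rule bij_betw_same_card)
  qed
  show ?thesis
    unfolding swaps_def using card_eq by (auto simp: Un_commute)
qed

lemma swaps_permutes: "s \<in> swaps A B K \<Longrightarrow> s permutes A \<union> B"
  unfolding permutes_def by (metis swaps_fixes swaps_involution)

lemma finite_swaps: "finite A \<Longrightarrow> finite B \<Longrightarrow> finite (swaps A B K)"
  by (rule finite_subset[of _ "{s. s permutes A \<union> B}"])
    (auto simp: swaps_permutes finite_permutations)

lemma transpose_conj_in_swaps:
  assumes s: "s \<in> swaps A B K" and "A \<inter> B = {}" and "a \<in> A" "b \<in> A"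
  shows "Transposition.transpose a b \<circ> s \<circ> Transposition.transpose a b \<in> swaps A B K"
proof -
  let ?t = "Transposition.transpose a b"
  let ?s = "?t \<circ> s \<circ> ?t"
  have tA: "?t x \<in> A \<longleftrightarrow> x \<in> A" and tB: "?t x \<in> B \<longleftrightarrow> x \<in> B" for x
    using assms by (auto simp: Transposition.transpose_def)
  have moved: "?t (s (?t x)) \<noteq> x \<longleftrightarrow> s (?t x) \<noteq> ?t x" for x
    by (metis transpose_involutory)
  have "{x\<in>A. ?s x \<noteq> x} = ?t ` {x\<in>A. s x \<noteq> x}"
    by (auto simp: in_transpose_image_iff tA moved dest: transpose_eq_imp_eq)
  then have card: "card {x\<in>A. ?s x \<noteq> x} = K"
    using s by (simp add: card_image card_swaps_moved)
  show ?thesis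
    unfolding swaps_def mem_Collect_eq
  proof (intro conjI allI impI ballI card)
    show "?s (?s x) = x" for x
      using s by (simp add: swaps_involution)
    show "?s x = x" if "x \<notin> A \<union> B" for x
      using that s by (simp add: tA tB swaps_fixes)
    show "?s x \<in> B" if "x \<in> A" "?s x \<noteq> x" for x
      using that swaps_moves_into(1)[OF s, of "?t x"] by (simp add: tA tB moved)
    show "?s y \<in> A" if "y \<in> B" "?s y \<noteq> y" for y
      using that swaps_moves_into(2)[OF s, of "?t y"] by (simp add: tA tB moved)
  qed
qed

lemma card_swaps_moving_le:
  assumes "A \<inter> B = {}" "finite A" "finite B"
  shows "card {s\<in>swaps A B K. s x \<noteq> x} * min (card A) (card B) \<le> K * card (swaps A B K)"
proof -
  have count: "card {s\<in>swaps A' B' K. s x \<noteq> x} * card A' = K * card (swaps A' B' K)"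
    if "A' \<inter> B' = {}" "finite A'" "finite B'" "x \<in> A'" for A' B'
    by (rule card_moving_mult[OF finite_swaps[OF that(2,3)] that(2)
          transpose_conj_in_swaps[OF _ that(1)] card_swaps_moved that(4)])
  consider "x \<in> A" | "x \<in> B" | "x \<notin> A \<union> B" by blast
  then show ?thesis
  proof cases
    case 1
    have "card {s\<in>swaps A B K. s x \<noteq> x} * min (card A) (card B)
        \<le> card {s\<in>swaps A B K. s x \<noteq> x} * card A" by simp
    also have "\<dots> = K * card (swaps A B K)" using count[of A B] 1 assms by simp
    finally show ?thesis .
  next
    case 2
    have "card {s\<in>swaps A B K. s x \<noteq> x} * min (card A) (card B)
        \<le> card {s\<in>swaps B A K. s x \<noteq> x} * card B" by (simp add: swaps_commute[of A B])
    also have "\<dots> = K * card (swaps A B K)"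
      using count[of B A] 2 assms by (simp add: swaps_commute[of A B] Int_commute)
    finally show ?thesis .
  next
    case 3
    then have "{s\<in>swaps A B K. s x \<noteq> x} = {}" by (auto simp: swaps_fixes)
    then show ?thesis by (simp only: card.empty mult_0 zero_le)
  qed
qed

definition exchange :: "'a set \<Rightarrow> ('a \<Rightarrow> 'a) \<Rightarrow> 'a \<Rightarrow> 'a" where
  "exchange A g x = (if x \<in> A then g x else if x \<in> g ` A then inv_into A g x else x)"

lemma exchange_in: "x \<in> A \<Longrightarrow> exchange A g x = g x"
  by (simp add: exchange_def)

lemma exchange_image:
  "inj_on g A \<Longrightarrow> g ` A \<inter> A = {} \<Longrightarrow> a \<in> A \<Longrightarrow> exchange A g (g a) = a"
  by (auto simp: exchange_def)

lemma exchange_outside: "x \<notin> A \<Longrightarrow> x \<notin> g ` A \<Longrightarrow> exchange A g x = x"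
  by (simp add: exchange_def)

lemma exchange_involution:
  assumes "inj_on g A" "g ` A \<inter> A = {}"
  shows "exchange A g (exchange A g x) = x"
  using assms by (cases "x \<in> A"; cases "x \<in> g ` A")
    (auto simp: exchange_in exchange_image exchange_outside)

lemma exchange_permutes:
  assumes "inj_on g A" "g ` A \<inter> A = {}"
  shows "exchange A g permutes A \<union> g ` A"
  unfolding permutes_def by (metis Un_iff exchange_outside exchange_involution[OF assms])

lemma inv_into_comp_involution:
  assumes \<rho>: "\<rho> permutes S" and s: "s permutes S" and inv: "\<And>x. s (s x) = x" and a: "a \<in> S"
  shows "inv_into S (\<rho> \<circ> s) a = s (inv_into S \<rho> a)"
proof (rule inv_into_f_eq)
  show "inj_on (\<rho> \<circ> s) S"
    using permutes_compose[OF s \<rho>] by (rule permutes_inj_on)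
  have "a \<in> \<rho> ` S" using a permutes_image[OF \<rho>] by simp
  then show "s (inv_into S \<rho> a) \<in> S" "(\<rho> \<circ> s) (s (inv_into S \<rho> a)) = a"
    using permutes_in_image[OF s] by (simp_all add: inv inv_into_into f_inv_into_f)
qed

lemma finite_strings [simp]: "finite (strings n)"
  by (simp add: strings_def)

lemma X1_subset_strings: "X1 r c \<subseteq> strings (r + c)"
  by (auto simp: X1_def)

lemma X2_subset_strings: "X2 r c \<subseteq> strings (r + c)"
  by (auto simp: X2_def)

lemma finite_X1 [simp]: "finite (X1 r c)"
  using X1_subset_strings by (rule finite_subset) simp

lemma finite_X2 [simp]: "finite (X2 r c)"
  using X2_subset_strings by (rule finite_subset) simp

lemma card_X1: "card (X1 r c) = 2 ^ r"
proof -
  have "X1 r c = (\<lambda>i. 2 ^ c * i) ` {..<2 ^ r}"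
    by (auto simp: X1_def strings_def power_add mult.commute[of "2 ^ r"] image_iff)
  then show ?thesis
    by (simp add: card_image inj_on_def)
qed

lemma card_X2: "card (X2 r c) = 2 ^ c"
proof -
  have "X2 r c = {..<2 ^ c}"
    by (auto simp: X2_def strings_def power_add intro: less_le_trans)
  then show ?thesis by simp
qed

lemma finite_Xpairs: "finite (Xpairs r c \<phi>)"
  by (rule finite_subset[of _ "X1 r c \<times> X2 r c"])
    (auto simp: Xpairs_def)

lemma perms_K_0_no_Xpair: "\<rho> \<in> perms_K r c 0 \<Longrightarrow> x \<in> X1 r c \<Longrightarrow> \<rho> x \<notin> X2 r c"
  using finite_Xpairs[of r c \<rho>] by (auto simp: perms_K_def Xpairs_def)

definition X2_preimage :: "nat \<Rightarrow> nat \<Rightarrow> (nat \<Rightarrow> nat) \<Rightarrow> nat set" where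
  "X2_preimage r c \<rho> = {y \<in> strings (r + c). \<rho> y \<in> X2 r c}"

lemma finite_X2_preimage [simp]: "finite (X2_preimage r c \<rho>)"
  by (simp add: X2_preimage_def)

lemma card_X2_preimage:
  assumes "\<rho> permutes strings (r + c)"
  shows "card (X2_preimage r c \<rho>) = 2 ^ c"
proof -
  have "\<rho> ` X2_preimage r c \<rho> = X2 r c"
  proof
    show "X2 r c \<subseteq> \<rho> ` X2_preimage r c \<rho>"
    proof
      fix y assume y: "y \<in> X2 r c"
      then have "y \<in> \<rho> ` strings (r + c)"
        using X2_subset_strings permutes_image[OF assms] by blast
      with y show "y \<in> \<rho> ` X2_preimage r c \<rho>"
        by (auto simp: X2_preimage_def)
    qed
  qed (auto simp: X2_preimage_def)
  moreover have "inj_on \<rho> (X2_preimage r c \<rho>)"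
    using permutes_inj[OF assms] by (rule inj_on_subset) simp
  ultimately have "bij_betw \<rho> (X2_preimage r c \<rho>) (X2 r c)"
    by (simp add: bij_betw_def)
  then show ?thesis by (simp add: bij_betw_same_card card_X2)
qed

lemma X1_Int_X2_preimage: "\<rho> \<in> perms_K r c 0 \<Longrightarrow> X1 r c \<inter> X2_preimage r c \<rho> = {}"
  by (auto simp: X2_preimage_def perms_K_0_no_Xpair)

lemma Xpairs_comp_swap:
  assumes \<rho>: "\<rho> \<in> perms_K r c 0" and s: "s \<in> swaps (X1 r c) (X2_preimage r c \<rho>) K"
  shows "Xpairs r c (\<rho> \<circ> s) = (\<lambda>x. (x, \<rho> (s x))) ` {x\<in>X1 r c. s x \<noteq> x}"
proof -
  have "\<rho> (s x) \<in> X2 r c \<longleftrightarrow> s x \<noteq> x" if "x \<in> X1 r c" for x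
    using that perms_K_0_no_Xpair[OF \<rho>] swaps_moves_into(1)[OF s]
    by (auto simp: X2_preimage_def)
  then show ?thesis
    by (auto simp: Xpairs_def)
qed

lemma swaps_permutes_strings:
  "s \<in> swaps (X1 r c) (X2_preimage r c \<rho>) K \<Longrightarrow> s permutes strings (r + c)"
  by (erule permutes_subset[OF swaps_permutes])
    (use X1_subset_strings in \<open>auto simp: X2_preimage_def\<close>)

lemma comp_swap_in_perms_K:
  assumes \<rho>: "\<rho> \<in> perms_K r c 0" and s: "s \<in> swaps (X1 r c) (X2_preimage r c \<rho>) K"
  shows "\<rho> \<circ> s \<in> perms_K r c K"
proof -
  have "s permutes strings (r + c)"
    using s by (rule swaps_permutes_strings)
  moreover have "card (Xpairs r c (\<rho> \<circ> s)) = K"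
    using card_swaps_moved[OF s] by (simp add: Xpairs_comp_swap[OF \<rho> s] card_image inj_on_def)
  ultimately show ?thesis
    using \<rho> by (simp add: perms_K_def permutes_compose)
qed

text \<open>The answer of the \<open>\<rho> \<circ> s\<close> oracle at \<open>(a, w)\<close> is \<open>\<rho> (s p)\<close> or \<open>s p\<close> for this point \<open>p\<close>,
  so it differs from the \<open>\<rho>\<close> oracle only if \<open>s\<close> moves \<open>p\<close>.\<close>

definition oracle_point :: "nat \<Rightarrow> (nat \<Rightarrow> nat) \<Rightarrow> nat \<Rightarrow> nat \<Rightarrow> nat" where
  "oracle_point n \<rho> a w = (if even w then a else inv_into (strings n) \<rho> a)"

lemma disagreement_comp_involution_subset:
  assumes "\<rho> permutes strings n" "s permutes strings n" "\<And>x. s (s x) = x"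
  shows "disagreement n m (oracle_fun n (\<rho> \<circ> s)) (oracle_fun n \<rho>)
    \<subseteq> {z\<in>basis_set n m.
         s (oracle_point n \<rho> (fst z) (snd (snd z))) \<noteq> oracle_point n \<rho> (fst z) (snd (snd z))}"
  using inv_into_comp_involution[OF assms]
  by (auto simp: disagreement_def oracle_fun_def oracle_point_def basis_set_def split: if_splits)

lemma success_prob_eq_sqnorm_on:
  "success_prob r c m Us out T \<phi>
     = sqnorm_on {z\<in>basis_set (r + c) m. out z \<in> Xpairs r c \<phi>} (run (r + c) m \<phi> Us T)"
  by (simp add: success_prob_def sqnorm_on_def sum.inter_filter)

lemma success_prob_comp_swap_le:
  assumes \<rho>: "\<rho> \<in> perms_K r c 0" and s: "s \<in> swaps (X1 r c) (X2_preimage r c \<rho>) K"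
    and U: "\<And>i. i \<le> T \<Longrightarrow> is_unitary (basis_set (r + c) m) (Us i)"
  defines "p \<equiv> \<lambda>z. oracle_point (r + c) \<rho> (fst z) (snd (snd z))"
  shows "success_prob r c m Us out T (\<rho> \<circ> s) \<le> (real T + 1) *
    (sqnorm_on {z\<in>basis_set (r + c) m. s (fst (out z)) \<noteq> fst (out z)} (run (r + c) m \<rho> Us T)
     + 4 * (\<Sum>i<T. sqnorm_on {z\<in>basis_set (r + c) m. s (p z) \<noteq> p z} (run (r + c) m \<rho> Us i)))"
proof -
  let ?n = "r + c"
  have \<rho>_perm: "\<rho> permutes strings ?n"
    using \<rho> by (simp add: perms_K_def)
  have s_perm: "s permutes strings ?n" and s_inv: "\<And>x. s (s x) = x"
    using s by (simp_all add: swaps_permutes_strings swaps_involution)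
  have "success_prob r c m Us out T (\<rho> \<circ> s) \<le> (real T + 1) *
      (sqnorm_on {z\<in>basis_set ?n m. out z \<in> Xpairs r c (\<rho> \<circ> s)} (run ?n m \<rho> Us T)
      + 4 * (\<Sum>i<T. sqnorm_on (disagreement ?n m (oracle_fun ?n (\<rho> \<circ> s)) (oracle_fun ?n \<rho>))
                      (run ?n m \<rho> Us i)))"
    unfolding success_prob_eq_sqnorm_on
    by (rule sqnorm_on_run_le[OF U permutes_compose[OF s_perm \<rho>_perm] \<rho>_perm]) auto
  also have "\<dots> \<le> (real T + 1) *
      (sqnorm_on {z\<in>basis_set ?n m. s (fst (out z)) \<noteq> fst (out z)} (run ?n m \<rho> Us T)
       + 4 * (\<Sum>i<T. sqnorm_on {z\<in>basis_set ?n m. s (p z) \<noteq> p z} (run ?n m \<rho> Us i)))"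
    using disagreement_comp_involution_subset[OF \<rho>_perm s_perm s_inv] Xpairs_comp_swap[OF \<rho> s]
    unfolding p_def by (intro mult_left_mono add_mono sum_mono sqnorm_on_mono) auto
  finally show ?thesis .
qed

lemma card_swaps_X1_moving_le:
  assumes \<rho>: "\<rho> \<in> perms_K r c 0"
  shows "real (card {s\<in>swaps (X1 r c) (X2_preimage r c \<rho>) K. s x \<noteq> x})
    \<le> real K * real (card (swaps (X1 r c) (X2_preimage r c \<rho>) K)) / 2 ^ min r c"
proof -
  have "card {s\<in>swaps (X1 r c) (X2_preimage r c \<rho>) K. s x \<noteq> x} * 2 ^ min r c
      \<le> K * card (swaps (X1 r c) (X2_preimage r c \<rho>) K)"
    using card_swaps_moving_le[OF X1_Int_X2_preimage[OF \<rho>], where x = x and K = K] \<rho>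
    by (simp add: card_X1 card_X2_preimage perms_K_def min_def split: if_splits)
  then have "real (card {s\<in>swaps (X1 r c) (X2_preimage r c \<rho>) K. s x \<noteq> x} * 2 ^ min r c)
      \<le> real (K * card (swaps (X1 r c) (X2_preimage r c \<rho>) K))"
    by (simp only: of_nat_le_iff)
  then show ?thesis
    by (simp add: field_simps)
qed

text \<open>Both terms of the bound in \<open>success_prob_comp_swap_le\<close> are averaged over \<open>s\<close> by
  counting, for each basis state, the swaps that move the relevant point.\<close>

lemma sum_success_prob_comp_swaps_le:
  fixes K :: nat
  assumes \<rho>: "\<rho> \<in> perms_K r c 0" and m: "m \<ge> 1"
    and U: "\<And>i. i \<le> T \<Longrightarrow> is_unitary (basis_set (r + c) m) (Us i)"
  defines "W \<equiv> swaps (X1 r c) (X2_preimage r c \<rho>) K"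
  shows "(\<Sum>s\<in>W. success_prob r c m Us out T (\<rho> \<circ> s))
    \<le> (real T + 1) * (1 + 4 * real T) * (real K * real (card W) / 2 ^ min r c)"
proof -
  let ?B = "basis_set (r + c) m"
  let ?v = "run (r + c) m \<rho> Us"
  let ?p = "\<lambda>z. oracle_point (r + c) \<rho> (fst z) (snd (snd z))"
  let ?a = "\<lambda>s. sqnorm_on {z\<in>?B. s (fst (out z)) \<noteq> fst (out z)} (?v T)"
  let ?b = "\<lambda>s i. sqnorm_on {z\<in>?B. s (?p z) \<noteq> ?p z} (?v i)"
  define \<delta> where "\<delta> = real K * real (card W) / 2 ^ min r c"
  have average: "(\<Sum>s\<in>W. sqnorm_on {z\<in>?B. s (f z) \<noteq> f z} (?v i)) \<le> \<delta>" if "i \<le> T" for f i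
    using card_swaps_X1_moving_le[OF \<rho>] that U m \<rho>
    by (intro sum_sqnorm_on_filter_le)
      (auto simp: W_def \<delta>_def finite_swaps sqnorm_on_run perms_K_def)
  have "(\<Sum>s\<in>W. success_prob r c m Us out T (\<rho> \<circ> s))
      \<le> (\<Sum>s\<in>W. (real T + 1) * (?a s + 4 * (\<Sum>i<T. ?b s i)))"
    using success_prob_comp_swap_le[OF \<rho> _ U] by (intro sum_mono) (simp add: W_def)
  also have "\<dots> = (real T + 1) * ((\<Sum>s\<in>W. ?a s) + 4 * (\<Sum>i<T. \<Sum>s\<in>W. ?b s i))"
    by (simp only: sum_distrib_left[symmetric] sum.distrib sum.swap[where A = W and B = "{..<T}"])
  also have "\<dots> \<le> (real T + 1) * (\<delta> + 4 * (\<Sum>i<T. \<delta>))"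
    using average by (intro mult_left_mono add_mono sum_mono) auto
  also have "\<dots> = (real T + 1) * (1 + 4 * real T) * \<delta>"
    by (simp add: algebra_simps)
  finally show ?thesis
    unfolding \<delta>_def .
qed

section \<open>Counting decompositions\<close>

definition swap_decompositions :: "nat \<Rightarrow> nat \<Rightarrow> nat \<Rightarrow> ((nat \<Rightarrow> nat) \<times> (nat \<Rightarrow> nat)) set" where
  "swap_decompositions r c K = (SIGMA \<rho>:perms_K r c 0. swaps (X1 r c) (X2_preimage r c \<rho>) K)"

locale xpair_perm =
  fixes r c K :: nat and \<phi> :: "nat \<Rightarrow> nat"
  assumes \<phi>_in: "\<phi> \<in> perms_K r c K"
begin

definition sources :: "nat set" where
  "sources = {x\<in>X1 r c. \<phi> x \<in> X2 r c}"

definition targets :: "nat set" where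
  "targets = {b\<in>strings (r + c). b \<notin> X1 r c \<and> \<phi> b \<notin> X2 r c}"

lemma \<phi>_permutes: "\<phi> permutes strings (r + c)"
  using \<phi>_in by (simp add: perms_K_def)

lemma sources_subset: "sources \<subseteq> X1 r c"
  by (auto simp: sources_def)

lemma finite_sources: "finite sources"
  using sources_subset by (rule finite_subset) simp

lemma finite_targets: "finite targets"
  by (simp add: targets_def)

lemma targets_disjoint: "targets \<inter> X1 r c = {}"
  by (auto simp: targets_def)

lemma Xpairs_eq_graph: "Xpairs r c \<phi> = (\<lambda>x. (x, \<phi> x)) ` sources"
  by (auto simp: Xpairs_def sources_def)

lemma card_sources: "card sources = K"
  using \<phi>_in by (simp add: Xpairs_eq_graph perms_K_def card_image inj_on_def)

lemma card_targets: "card targets + 2 ^ r + 2 ^ c = 2 ^ (r + c) + K"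
proof -
  let ?P = "X2_preimage r c \<phi>"
  have "strings (r + c) = (X1 r c \<union> ?P) \<union> targets" "(X1 r c \<union> ?P) \<inter> targets = {}"
    using X1_subset_strings by (auto simp: X2_preimage_def targets_def)
  then have "2 ^ (r + c) = card (X1 r c \<union> ?P) + card targets"
    by (metis card_Un_disjoint card_lessThan finite_UnI finite_X1 finite_X2_preimage finite_strings
        infinite_Un strings_def)
  moreover have "card (X1 r c \<union> ?P) + card (X1 r c \<inter> ?P) = 2 ^ r + 2 ^ c"
    by (simp add: card_Un_Int[symmetric] card_X1 card_X2_preimage[OF \<phi>_permutes])
  moreover have "X1 r c \<inter> ?P = sources"
    using X1_subset_strings by (auto simp: X2_preimage_def sources_def)
  ultimately show ?thesis
    using card_sources by simp
qed


context
  fixes g assumes g_funcset: "g \<in> sources \<rightarrow>\<^sub>E targets" and g_inj: "inj_on g sources"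
begin

lemma g_targets: "a \<in> sources \<Longrightarrow> g a \<in> targets"
  using g_funcset by auto

lemma image_g_disjoint: "g ` sources \<inter> sources = {}"
  using g_targets targets_disjoint sources_subset by blast

lemma X1_notin_image_g: "x \<in> X1 r c \<Longrightarrow> x \<notin> g ` sources"
  using g_targets targets_disjoint by blast

lemma exchange_g: "a \<in> sources \<Longrightarrow> exchange sources g (g a) = a"
  by (rule exchange_image[OF g_inj image_g_disjoint])

lemma exchange_exchange: "exchange sources g (exchange sources g x) = x"
  by (rule exchange_involution[OF g_inj image_g_disjoint])

lemma X1_moved_by_exchange: "{x\<in>X1 r c. exchange sources g x \<noteq> x} = sources"
proof (rule set_eqI, rule iffI)
  show "x \<in> sources" if "x \<in> {x\<in>X1 r c. exchange sources g x \<noteq> x}" for x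
    using that exchange_outside[OF _ X1_notin_image_g[of x]] by auto
  show "x \<in> {x\<in>X1 r c. exchange sources g x \<noteq> x}" if x: "x \<in> sources" for x
    using x sources_subset exchange_in[OF x] g_targets[OF x] targets_disjoint by auto
qed

lemma comp_exchange_in_perms_K_0: "\<phi> \<circ> exchange sources g \<in> perms_K r c 0"
proof -
  have "exchange sources g permutes strings (r + c)"
    using exchange_permutes[OF g_inj image_g_disjoint]
    by (rule permutes_subset)
      (use sources_subset X1_subset_strings g_targets in \<open>auto simp: targets_def\<close>)
  moreover have "\<phi> (exchange sources g x) \<notin> X2 r c" if "x \<in> X1 r c" for x
    using that g_targets[of x] X1_notin_image_g[OF that]
    by (cases "x \<in> sources") (auto simp: exchange_in exchange_outside sources_def targets_def)
  then have "Xpairs r c (\<phi> \<circ> exchange sources g) = {}"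
    by (auto simp: Xpairs_def)
  ultimately show ?thesis
    using \<phi>_permutes by (simp add: perms_K_def permutes_compose)
qed

lemma exchange_fixes:
  assumes "x \<notin> X1 r c \<union> X2_preimage r c (\<phi> \<circ> exchange sources g)"
  shows "exchange sources g x = x"
proof (rule exchange_outside)
  show "x \<notin> sources"
    using assms sources_subset by auto
  show "x \<notin> g ` sources"
  proof
    assume "x \<in> g ` sources"
    then obtain a where a: "a \<in> sources" "x = g a" by blast
    then have "x \<in> strings (r + c)" "\<phi> (exchange sources g x) \<in> X2 r c"
      using g_targets[OF a(1)] exchange_g[OF a(1)] by (auto simp: targets_def sources_def)
    with assms show False by (simp add: X2_preimage_def)
  qed
qed

lemma exchange_X1_into:
  assumes "x \<in> X1 r c" "exchange sources g x \<noteq> x"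
  shows "exchange sources g x \<in> X2_preimage r c (\<phi> \<circ> exchange sources g)"
proof -
  have x: "x \<in> sources"
    using assms X1_moved_by_exchange by blast
  have "g x \<in> strings (r + c)" "\<phi> x \<in> X2 r c"
    using g_targets[OF x] x by (simp_all add: targets_def sources_def)
  then show ?thesis
    by (simp add: exchange_in[OF x] exchange_g[OF x] X2_preimage_def)
qed

lemma exchange_X2_preimage_into:
  assumes y: "y \<in> X2_preimage r c (\<phi> \<circ> exchange sources g)" "exchange sources g y \<noteq> y"
  shows "exchange sources g y \<in> X1 r c"
proof -
  have "y \<notin> sources"
  proof
    assume y_src: "y \<in> sources"
    then have "\<phi> (exchange sources g y) \<notin> X2 r c"
      using g_targets[OF y_src] by (simp add: exchange_in targets_def)
    with y(1) show False by (simp add: X2_preimage_def)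
  qed
  have "y \<in> g ` sources"
  proof (rule ccontr)
    assume "y \<notin> g ` sources"
    with \<open>y \<notin> sources\<close> have "exchange sources g y = y" by (rule exchange_outside)
    with y(2) show False by simp
  qed
  then obtain a where "a \<in> sources" "y = g a" by blast
  then show ?thesis
    using exchange_g sources_subset by auto
qed

lemma exchange_in_swaps:
  "exchange sources g \<in> swaps (X1 r c) (X2_preimage r c (\<phi> \<circ> exchange sources g)) K"
  unfolding swaps_def
  by (simp add: exchange_exchange exchange_fixes exchange_X1_into exchange_X2_preimage_into
      X1_moved_by_exchange card_sources)

lemma exchange_decomposition:
  "(\<phi> \<circ> exchange sources g, exchange sources g) \<in> swap_decompositions r c K"
  by (simp add: swap_decompositions_def comp_exchange_in_perms_K_0 exchange_in_swaps)

lemma comp_exchange_exchange: "\<phi> \<circ> exchange sources g \<circ> exchange sources g = \<phi>"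
  by (simp add: fun_eq_iff exchange_exchange)

end

context
  fixes \<rho> s
  assumes decomposition: "(\<rho>, s) \<in> swap_decompositions r c K" and comp: "\<rho> \<circ> s = \<phi>"
begin

lemma decomposition_perms_K_0: "\<rho> \<in> perms_K r c 0"
  and decomposition_swaps: "s \<in> swaps (X1 r c) (X2_preimage r c \<rho>) K"
  using decomposition by (auto simp: swap_decompositions_def)

lemma decomposition_eq_comp: "\<rho> = \<phi> \<circ> s"
proof
  fix x
  have "\<rho> (s (s x)) = \<phi> (s x)"
    using comp by (metis comp_apply)
  then show "\<rho> x = (\<phi> \<circ> s) x"
    by (simp add: swaps_involution[OF decomposition_swaps])
qed

lemma X1_moved_by_decomposition: "{x\<in>X1 r c. s x \<noteq> x} = sources"
proof -
  have "fst ` Xpairs r c (\<rho> \<circ> s) = {x\<in>X1 r c. s x \<noteq> x}"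
    unfolding Xpairs_comp_swap[OF decomposition_perms_K_0 decomposition_swaps]
    by (simp add: image_image)
  moreover have "fst ` Xpairs r c (\<rho> \<circ> s) = sources"
    unfolding comp Xpairs_eq_graph by (simp add: image_image)
  ultimately show ?thesis by simp
qed

lemma restrict_decomposition_targets: "restrict s sources \<in> sources \<rightarrow>\<^sub>E targets"
proof -
  have "s a \<in> targets" if a: "a \<in> sources" for a
  proof -
    have a1: "a \<in> X1 r c" and "s a \<noteq> a"
      using a X1_moved_by_decomposition by auto
    then have "s a \<in> X2_preimage r c \<rho>"
      by (rule swaps_moves_into(1)[OF decomposition_swaps])
    moreover have "\<phi> (s a) \<notin> X2 r c"
      using perms_K_0_no_Xpair[OF decomposition_perms_K_0 a1]
      by (simp add: decomposition_eq_comp swaps_involution[OF decomposition_swaps])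
    ultimately show ?thesis
      using X1_Int_X2_preimage[OF decomposition_perms_K_0]
      by (auto simp: targets_def X2_preimage_def)
  qed
  then show ?thesis by simp
qed

lemma decomposition_fixes:
  assumes "x \<notin> sources" "x \<notin> s ` sources"
  shows "s x = x"
proof (rule ccontr)
  assume moves: "s x \<noteq> x"
  then have "x \<in> X2_preimage r c \<rho>"
    using assms X1_moved_by_decomposition swaps_fixes[OF decomposition_swaps] by blast
  then have "s x \<in> X1 r c"
    using moves by (rule swaps_moves_into(2)[OF decomposition_swaps])
  then have "s x \<in> sources"
    using moves X1_moved_by_decomposition swaps_involution[OF decomposition_swaps]
    by (metis (mono_tags, lifting) mem_Collect_eq)
  then have "x \<in> s ` sources"
    using swaps_involution[OF decomposition_swaps] by (metis image_eqI)
  with assms show False by blast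
qed

lemma decomposition_eq_exchange: "s = exchange sources (restrict s sources)"
proof
  let ?g = "restrict s sources"
  have inv: "s (s x) = x" for x
    using decomposition_swaps by (rule swaps_involution)
  have g_inj: "inj_on ?g sources"
    by (rule inj_onI) (metis inv restrict_apply)
  have disj: "?g ` sources \<inter> sources = {}"
    using restrict_decomposition_targets targets_disjoint sources_subset by fastforce
  fix x
  consider "x \<in> sources" | a where "a \<in> sources" "x = s a" | "x \<notin> sources" "x \<notin> s ` sources"
    by blast
  then show "s x = exchange sources ?g x"
  proof cases
    case 1
    then show ?thesis by (simp add: exchange_in)
  next
    case 2
    have "exchange sources ?g (s a) = a"
      using exchange_image[OF g_inj disj 2(1)] 2(1) by simp
    with 2 show ?thesis by (simp add: inv)
  next
    case 3
    then show ?thesis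
      by (simp add: decomposition_fixes exchange_outside)
  qed
qed

end

lemma decompositions_eq_image:
  "{p\<in>swap_decompositions r c K. fst p \<circ> snd p = \<phi>}
     = (\<lambda>g. (\<phi> \<circ> exchange sources g, exchange sources g))
         ` {g\<in>sources \<rightarrow>\<^sub>E targets. inj_on g sources}"
    (is "?L = ?G ` ?I")
proof
  show "?G ` ?I \<subseteq> ?L"
    by (auto simp: exchange_decomposition comp_exchange_exchange)
  show "?L \<subseteq> ?G ` ?I"
  proof
    fix p assume "p \<in> ?L"
    then obtain \<rho> s where p: "p = (\<rho>, s)" "(\<rho>, s) \<in> swap_decompositions r c K"
      and comp: "\<rho> \<circ> s = \<phi>"
      by (cases p) auto
    have "inj_on s sources"
      using swaps_involution[OF decomposition_swaps[OF p(2) comp]] by (metis inj_onI)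
    then have "restrict s sources \<in> ?I"
      using restrict_decomposition_targets[OF p(2) comp] by simp
    moreover have "p = ?G (restrict s sources)"
      using p decomposition_eq_comp[OF p(2) comp] decomposition_eq_exchange[OF p(2) comp] by simp
    ultimately show "p \<in> ?G ` ?I" by blast
  qed
qed

lemma card_decompositions:
  "card {p\<in>swap_decompositions r c K. fst p \<circ> snd p = \<phi>}
     = (\<Prod>i<K. 2 ^ (r + c) + K - 2 ^ r - 2 ^ c - i)"
proof -
  let ?I = "{g\<in>sources \<rightarrow>\<^sub>E targets. inj_on g sources}"
  have "inj_on (\<lambda>g. (\<phi> \<circ> exchange sources g, exchange sources g)) ?I"
  proof (rule inj_onI)
    fix g g' assume g: "g \<in> ?I" and g': "g' \<in> ?I"
        and "(\<phi> \<circ> exchange sources g, exchange sources g)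
        = (\<phi> \<circ> exchange sources g', exchange sources g')"
    then have "g a = g' a" if "a \<in> sources" for a
      using that by (metis exchange_in prod.inject)
    with g g' show "g = g'"
      by (auto intro: PiE_ext)
  qed
  moreover have "card ?I = (\<Prod>i<K. card targets - i)"
    using card_inj_on_subset_funcset[OF finite_sources finite_targets subset_refl]
    by (simp add: card_sources atLeast0LessThan)
  moreover have "card targets = 2 ^ (r + c) + K - 2 ^ r - 2 ^ c"
    using card_targets by simp
  ultimately show ?thesis
    by (simp add: decompositions_eq_image card_image)
qed

end

lemma finite_perms_K: "finite (perms_K r c K)"
  by (rule finite_subset[of _ "{\<phi>. \<phi> permutes strings (r + c)}"])
    (auto simp: perms_K_def finite_permutations)

lemma finite_swap_decompositions: "finite (swap_decompositions r c K)"
  unfolding swap_decompositions_def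
  by (intro finite_SigmaI finite_perms_K finite_swaps) simp_all

text \<open>Every permutation with \<open>K\<close> X-pairs has the same number of decompositions, so the uniform
  distribution on them is the image of the uniform distribution on decompositions.\<close>

lemma sum_swap_decompositions:
  fixes F :: "(nat \<Rightarrow> nat) \<Rightarrow> real"
  shows "(\<Sum>p\<in>swap_decompositions r c K. F (fst p \<circ> snd p))
     = real (\<Prod>i<K. 2 ^ (r + c) + K - 2 ^ r - 2 ^ c - i) * (\<Sum>\<phi>\<in>perms_K r c K. F \<phi>)"
proof -
  let ?D = "swap_decompositions r c K"
  have "(\<lambda>p. fst p \<circ> snd p) ` ?D \<subseteq> perms_K r c K"
    by (auto simp: swap_decompositions_def comp_swap_in_perms_K)
  then have "(\<Sum>p\<in>?D. F (fst p \<circ> snd p))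
      = (\<Sum>\<phi>\<in>perms_K r c K. \<Sum>p\<in>{p\<in>?D. fst p \<circ> snd p = \<phi>}. F (fst p \<circ> snd p))"
    by (rule sum.group[OF finite_swap_decompositions finite_perms_K, symmetric])
  also have "\<dots> = (\<Sum>\<phi>\<in>perms_K r c K. real (\<Prod>i<K. 2 ^ (r + c) + K - 2 ^ r - 2 ^ c - i) * F \<phi>)"
  proof (rule sum.cong [OF refl])
    fix \<phi> assume "\<phi> \<in> perms_K r c K"
    then interpret xpair_perm r c K \<phi> by unfold_locales
    have "(\<Sum>p\<in>{p\<in>?D. fst p \<circ> snd p = \<phi>}. F (fst p \<circ> snd p)) = (\<Sum>p\<in>{p\<in>?D. fst p \<circ> snd p = \<phi>}. F \<phi>)"
      by (rule sum.cong) auto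
    then show "(\<Sum>p\<in>{p\<in>?D. fst p \<circ> snd p = \<phi>}. F (fst p \<circ> snd p))
        = real (\<Prod>i<K. 2 ^ (r + c) + K - 2 ^ r - 2 ^ c - i) * F \<phi>"
      by (simp add: card_decompositions)
  qed
  finally show ?thesis
    by (simp add: sum_distrib_left)
qed

lemma two_power_add_le: "1 \<le> r \<Longrightarrow> 1 \<le> c \<Longrightarrow> (2::nat) ^ r + 2 ^ c \<le> 2 ^ (r + c)"
proof -
  assume "1 \<le> r" "1 \<le> c"
  then have "2 \<le> (2::nat) ^ r" "2 \<le> (2::nat) ^ c"
    using power_increasing[of 1 _ "2::nat"] by simp_all
  then have "2 * 2 ^ c \<le> (2::nat) ^ r * 2 ^ c" "2 ^ r * 2 \<le> (2::nat) ^ r * 2 ^ c"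
    by (simp_all only: mult_right_mono mult_left_mono zero_le)
  then show ?thesis
    unfolding power_add by linarith
qed

lemma sum_success_prob_swap_decompositions_le:
  assumes "m \<ge> 1" and U: "\<And>i. i \<le> T \<Longrightarrow> is_unitary (basis_set (r + c) m) (Us i)"
  shows "(\<Sum>p\<in>swap_decompositions r c K. success_prob r c m Us out T (fst p \<circ> snd p))
    \<le> (real T + 1) * (1 + 4 * real T) * real K / 2 ^ min r c
      * real (card (swap_decompositions r c K))"
proof -
  let ?W = "\<lambda>\<rho>. swaps (X1 r c) (X2_preimage r c \<rho>) K"
  let ?f = "success_prob r c m Us out T"
  let ?\<beta> = "(real T + 1) * (1 + 4 * real T) * real K / 2 ^ min r c"
  have "(\<Sum>p\<in>swap_decompositions r c K. ?f (fst p \<circ> snd p))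
      = (\<Sum>\<rho>\<in>perms_K r c 0. \<Sum>s\<in>?W \<rho>. ?f (\<rho> \<circ> s))"
    unfolding swap_decompositions_def
    by (subst sum.Sigma) (simp_all add: finite_perms_K finite_swaps split_def)
  also have "\<dots> \<le> (\<Sum>\<rho>\<in>perms_K r c 0. ?\<beta> * real (card (?W \<rho>)))"
  proof (rule sum_mono)
    fix \<rho> assume "\<rho> \<in> perms_K r c 0"
    from sum_success_prob_comp_swaps_le[where Us = Us and T = T and out = out and K = K,
        OF this assms]
    show "(\<Sum>s\<in>?W \<rho>. ?f (\<rho> \<circ> s)) \<le> ?\<beta> * real (card (?W \<rho>))"
      by simp
  qed
  also have "\<dots> = ?\<beta> * real (card (swap_decompositions r c K))"
    by (simp add: swap_decompositions_def card_SigmaI finite_perms_K finite_swaps sum_distrib_left)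
  finally show ?thesis .
qed

lemma avg_success_le:
  assumes "r \<ge> 1" "c \<ge> 1" "m \<ge> 1"
    and U: "\<And>i. i \<le> T \<Longrightarrow> is_unitary (basis_set (r + c) m) (Us i)"
  shows "avg_success r c K m Us out T \<le> (real T + 1) * (1 + 4 * real T) * real K / 2 ^ min r c"
proof -
  let ?D = "swap_decompositions r c K" and ?P = "perms_K r c K"
  let ?f = "success_prob r c m Us out T"
  define N where "N = real (\<Prod>i<K. 2 ^ (r + c) + K - 2 ^ r - 2 ^ c - i)"
  define \<beta> where "\<beta> = (real T + 1) * (1 + 4 * real T) * real K / 2 ^ min r c"
  have "(\<Prod>i<K. 2 ^ (r + c) + K - 2 ^ r - 2 ^ c - i) > (0::nat)"
    using two_power_add_le[OF assms(1,2)] by (intro prod_pos) auto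
  then have N_pos: "N > 0"
    unfolding N_def by (simp only: of_nat_0_less_iff)
  have "N * (\<Sum>\<phi>\<in>?P. ?f \<phi>) \<le> \<beta> * (N * real (card ?P))"
    using sum_success_prob_swap_decompositions_le[where Us = Us and T = T and K = K and out = out,
        OF assms(3) U]
      sum_swap_decompositions[where F = ?f and K = K]
      sum_swap_decompositions[where F = "\<lambda>_. 1" and K = K]
    by (simp add: N_def \<beta>_def)
  then have "(\<Sum>\<phi>\<in>?P. ?f \<phi>) \<le> \<beta> * real (card ?P)"
    using N_pos by (simp add: mult.left_commute[of \<beta>])
  moreover have "0 \<le> \<beta>"
    by (simp add: \<beta>_def)
  ultimately show ?thesis
    unfolding avg_success_def \<beta>_def[symmetric]
    by (cases "card ?P = 0") (simp_all add: divide_le_eq)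
qed

theorem lemma4:
  fixes r c K T m :: nat and Us :: "nat \<Rightarrow> op" and out :: "basis \<Rightarrow> nat \<times> nat"
    and \<epsilon> :: real
  assumes "r \<ge> 1" and "c \<ge> 1"
    and "1 \<le> K" and "K \<le> 2 ^ min r c"
    and "m \<ge> 1"
    and "\<forall>i\<le>T. is_unitary (basis_set (r + c) m) (Us i)"
    and "\<epsilon> = avg_success r c K m Us out T"
    and "\<epsilon> > 0"
  shows "\<epsilon> \<le> 8 * (real T + 1)^2 * real K / 2 ^ min r c"
proof -
  have "\<epsilon> \<le> (real T + 1) * (1 + 4 * real T) * real K / 2 ^ min r c"
    using avg_success_le[of r c m T Us K out] assms by simp
  also have "\<dots> \<le> 8 * (real T + 1)^2 * real K / 2 ^ min r c"
    by (intro divide_right_mono mult_right_mono) (simp_all add: power2_eq_square algebra_simps)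
  finally show ?thesis .
qed

end
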